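(* Let $0<e_0\le 1$ be a constant. If an algorithm is an $\alpha$-approximation algorithm for the classical problem $P_m\mid\mid C_{\max}$, then using the schedule it produces (the same assignment of jobs to machines and the same order of jobs on each machine, processed without unnecessary idle time) yields an $\tfrac{\alpha}{e_0}$-approximation algorithm for $P_m, e_{i,k}\ge e_0\mid\mid C_{\max}$.
   Context: Shared-processing parallel machine scheduling: there are $m$ identical machines $M_1,\dots,M_m$ and $n$ primary jobs, all available at time $0$, job $j$ having processing time $p_j>0$. Each job is processed by exactly one machine without interruption; each machine processes its jobs one after another. The time axis of machine $M_i$ is partitioned into consecutive intervals $(0,t_{i,1}],(t_{i,1},t_{i,2}],\dots$ with sharing ratios $e_{i,k}\in(0,1]$; during the $k$-th interval $M_i$ processes primary work at rate $e_{i,k}$ (so a job of length $p$ started at time $s$ completes at the earliest $C$ with $\int_s^C(\text{rate of }M_i)\,dt=p$). The makespan is $C_{\max}=\max_j C_j$. $P_m, e_{i,k}\ge e_0\mid\mid C_{\max}$ denotes makespan minimization when all sharing ratios on all machines satisfy $e_{i,k}\ge e_0$. $P_m\mid\mid C_{\max}$ is the classical problem where all ratios equal $1$. *)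

theory Defs
  imports "HOL-Analysis.Analysis"
begin

text \<open>Jobs are the indices 0..<length ps of a list ps of processing times.  A sharing profile for machine i is given by breakpoints
  t i 0 = 0 < t i 1 < t i 2 < ... (unbounded) and ratios e i k; during the interval
  (t i k, t i (Suc k)] machine i processes primary work at rate e i k.\<close>

definition valid_profile :: "nat \<Rightarrow> real \<Rightarrow> (nat \<Rightarrow> nat \<Rightarrow> real) \<Rightarrow> (nat \<Rightarrow> nat \<Rightarrow> real) \<Rightarrow> bool" where
  "valid_profile m e0 t e \<longleftrightarrow>
     (\<forall>i<m. t i 0 = 0 \<and> strict_mono (t i) \<and> (\<forall>B. \<exists>k. B < t i k)
            \<and> (\<forall>k. e0 \<le> e i k \<and> e i k \<le> 1 \<and> 0 < e i k))"

definition rate :: "(nat \<Rightarrow> nat \<Rightarrow> real) \<Rightarrow> (nat \<Rightarrow> nat \<Rightarrow> real) \<Rightarrow> nat \<Rightarrow> real \<Rightarrow> real" where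
  "rate t e i x = e i (LEAST k. x \<le> t i (Suc k))"

text \<open>Completion times of a sequence of jobs (processing time, idle time inserted
  before the job) processed one after another on a machine with rate function r,
  starting at time s: a job of length p started at time a completes at the earliest
  C with integral of r over [a,C] equal to p.\<close>
fun ctimes :: "(real \<Rightarrow> real) \<Rightarrow> real \<Rightarrow> (real \<times> real) list \<Rightarrow> real list" where
  "ctimes r s [] = []"
| "ctimes r s ((p, d) # rest) =
     (let a = s + d; C = Inf {C. a \<le> C \<and> integral {a..C} r = p} in C # ctimes r C rest)"

text \<open>A schedule: for each machine the list of (job, idle time before the job),
  in processing order.\<close>
definition valid_sched :: "nat \<Rightarrow> nat \<Rightarrow> (nat \<times> real) list list \<Rightarrow> bool" where
  "valid_sched m n \<sigma> \<longleftrightarrow> length \<sigma> = m \<and> distinct (map fst (concat \<sigma>))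
     \<and> set (map fst (concat \<sigma>)) = {..<n} \<and> (\<forall>x\<in>set (concat \<sigma>). 0 \<le> snd x)"

definition makespan :: "real list \<Rightarrow> (nat \<Rightarrow> real \<Rightarrow> real) \<Rightarrow> (nat \<times> real) list list \<Rightarrow> real" where
  "makespan ps R \<sigma> =
     Max ({0} \<union> (\<Union>i<length \<sigma>. set (ctimes (R i) 0 (map (\<lambda>(j, d). (ps ! j, d)) (\<sigma> ! i)))))"

definition opt :: "nat \<Rightarrow> real list \<Rightarrow> (nat \<Rightarrow> real \<Rightarrow> real) \<Rightarrow> real" where
  "opt m ps R = Inf {makespan ps R \<sigma> | \<sigma>. valid_sched m (length ps) \<sigma>}"

definition nodelay :: "nat list list \<Rightarrow> (nat \<times> real) list list" where
  "nodelay A = map (map (\<lambda>j. (j, 0))) A"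

definition unit_rate :: "nat \<Rightarrow> real \<Rightarrow> real" where
  "unit_rate i x = 1"

end

theory Submission
  imports Defs
begin

text \<open>A machine whose rate stays in [e0, 1] finishes a job of length p started at time a
  no earlier than a + p and no later than a + p / e0.  Consequently, on any schedule every
  completion time under shared processing is at least the classical one, so the optimum can
  only grow; and on a schedule without idle time, induction along each machine shows that every
  completion time under shared processing is at most 1 / e0 times the classical one.
  Chaining: C_max(S) \<le> C_max^1(S) / e0 \<le> \<alpha> OPT^1 / e0 \<le> \<alpha> OPT / e0.\<close>

definition admissible_rate :: "real \<Rightarrow> (real \<Rightarrow> real) \<Rightarrow> bool" where
  "admissible_rate e0 r \<longleftrightarrow> (\<forall>x. e0 \<le> r x \<and> r x \<le> 1) \<and> (\<forall>a b. r integrable_on {a..b})"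

lemma rate_eq_first:
  assumes "x \<le> t i (Suc 0)"
  shows "rate t e i x = e i 0"
  using assms unfolding rate_def by (simp add: Least_eq_0)

lemma rate_eq_interval:
  assumes "strict_mono (t i)" and "t i K < x" and "x \<le> t i (Suc K)"
  shows "rate t e i x = e i K"
proof -
  have "(LEAST k. x \<le> t i (Suc k)) = K"
  proof (rule Least_equality)
    fix k assume "x \<le> t i (Suc k)"
    with assms have "t i K < t i (Suc k)" by linarith
    with assms(1) show "K \<le> k" by (simp add: strict_mono_less)
  qed (fact assms(3))
  then show ?thesis unfolding rate_def by simp
qed

lemma rate_integrable:
  assumes "valid_profile m e0 t e" and "i < m"
  shows "rate t e i integrable_on {a..b}"
proof -
  have t0: "t i 0 = 0" and mono: "strict_mono (t i)" and unbounded: "\<exists>K. b < t i K"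
    using assms unfolding valid_profile_def by auto
  have step: "t i K \<le> t i (Suc K)" for K
    using mono by (simp add: strict_mono_less_eq)
  have piece: "rate t e i integrable_on {t i K..t i (Suc K)}" for K
  proof (rule integrable_spike_finite[where S = "{t i K}" and f = "\<lambda>_. e i K"])
    fix x assume "x \<in> {t i K..t i (Suc K)} - {t i K}"
    then show "rate t e i x = e i K" using rate_eq_interval[of t i, OF mono] by simp
  next
    show "(\<lambda>_. e i K) integrable_on {t i K..t i (Suc K)}" by (rule integrable_const_ivl)
  qed simp
  have prefix: "rate t e i integrable_on {c..t i K}" if "c \<le> 0" for c K
  proof (induction K)
    case 0
    show ?case
    proof (rule integrable_eq)
      show "(\<lambda>_. e i 0) integrable_on {c..t i 0}" by (rule integrable_const_ivl)
      fix x assume "x \<in> {c..t i 0}"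
      then show "e i 0 = rate t e i x" using step[of 0] by (simp add: rate_eq_first)
    qed
  next
    case (Suc K)
    have "t i 0 \<le> t i K" using mono by (simp add: strict_mono_less_eq)
    then have "c \<le> t i K" using that t0 by simp
    then show ?case
      using Henstock_Kurzweil_Integration.integrable_combine[OF _ step Suc.IH piece] by simp
  qed
  obtain K where "b < t i K" using unbounded by blast
  then have "{a..b} \<subseteq> {min a 0..t i K}" by auto
  then show ?thesis using integrable_subinterval_real[OF prefix[of "min a 0" K]] by simp
qed

lemma admissible_rate_rate:
  assumes "valid_profile m e0 t e" and "i < m"
  shows "admissible_rate e0 (rate t e i)"
  using assms rate_integrable unfolding admissible_rate_def valid_profile_def rate_def by auto

definition completion_time :: "(real \<Rightarrow> real) \<Rightarrow> real \<Rightarrow> real \<Rightarrow> real" where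
  "completion_time r a p = Inf {C. a \<le> C \<and> integral {a..C} r = p}"

declare ctimes.simps(2) [simp del]

lemma ctimes_Cons [simp]:
  "ctimes r s ((p, d) # ys) = completion_time r (s + d) p # ctimes r (completion_time r (s + d) p) ys"
  by (simp add: ctimes.simps(2) completion_time_def Let_def)

lemma completion_time_unit_rate:
  assumes "0 \<le> p"
  shows "completion_time (unit_rate i) a p = a + p"
proof -
  have "unit_rate i = (\<lambda>_. 1)" by (simp add: unit_rate_def fun_eq_iff)
  then have "{C. a \<le> C \<and> integral {a..C} (unit_rate i) = p} = {a + p}"
    using assms by auto
  then show ?thesis unfolding completion_time_def by simp
qed

lemma integral_admissible_rate_bounds:
  assumes "admissible_rate e0 r" and "a \<le> C"
  shows "e0 * (C - a) \<le> integral {a..C} r" and "integral {a..C} r \<le> C - a"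
proof -
  have bounds: "\<And>x. e0 \<le> r x \<and> r x \<le> 1" and int: "r integrable_on {a..C}"
    using assms(1) unfolding admissible_rate_def by auto
  have "integral {a..C} (\<lambda>_. e0) \<le> integral {a..C} r"
    using int bounds by (intro integral_le) auto
  then show "e0 * (C - a) \<le> integral {a..C} r" using assms(2) by (simp add: mult.commute)
  have "integral {a..C} r \<le> integral {a..C} (\<lambda>_. 1)"
    using int bounds by (intro integral_le) auto
  then show "integral {a..C} r \<le> C - a" using assms(2) by simp
qed

lemma completion_time_bounds:
  assumes r: "admissible_rate e0 r" and "0 < e0" and "0 \<le> p"
  shows "a + p \<le> completion_time r a p" and "completion_time r a p \<le> a + p / e0"
proof -
  let ?S = "{C. a \<le> C \<and> integral {a..C} r = p}"
  define b where "b = a + p / e0"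
  have "a \<le> b" using assms by (simp add: b_def)
  moreover have "p \<le> integral {a..b} r"
    using integral_admissible_rate_bounds(1)[OF r \<open>a \<le> b\<close>] \<open>0 < e0\<close> by (simp add: b_def)
  moreover have "continuous_on {a..b} (\<lambda>x. integral {a..x} r)"
    using r unfolding admissible_rate_def by (intro indefinite_integral_continuous_1) auto
  ultimately obtain C where C: "a \<le> C" "C \<le> b" "integral {a..C} r = p"
    using IVT'[of "\<lambda>x. integral {a..x} r" a p b] \<open>0 \<le> p\<close> by auto
  \<comment> \<open>The witness C is needed for the lower bound as well: Inf of an empty set is unspecified.\<close>
  then have "C \<in> ?S" by simp
  have "bdd_below ?S" by (rule bdd_belowI[of _ a]) simp
  show "completion_time r a p \<le> a + p / e0"
    unfolding completion_time_def using cInf_lower[OF \<open>C \<in> ?S\<close> \<open>bdd_below ?S\<close>] C b_def by simp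
  show "a + p \<le> completion_time r a p"
    unfolding completion_time_def
    using \<open>C \<in> ?S\<close> integral_admissible_rate_bounds(2)[OF r] by (intro cInf_greatest) force+
qed

lemma ctimes_unit_rate_le:
  assumes r: "admissible_rate e0 r" and "0 < e0"
    and "\<forall>(p, d)\<in>set ys. 0 \<le> p \<and> 0 \<le> d" and "s' \<le> s"
  shows "list_all2 (\<le>) (ctimes (unit_rate i) s' ys) (ctimes r s ys)"
  using assms(3,4)
proof (induction ys arbitrary: s s')
  case Nil
  show ?case by simp
next
  case (Cons pd ys)
  obtain p d where pd: "pd = (p, d)" by fastforce
  with Cons.prems(1) have "0 \<le> p" by auto
  then have "completion_time (unit_rate i) (s' + d) p \<le> completion_time r (s + d) p"
    using completion_time_unit_rate completion_time_bounds(1)[OF r \<open>0 < e0\<close>, of p "s + d"] \<open>s' \<le> s\<close>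
    by simp
  with Cons pd show ?case by simp
qed

lemma ctimes_le_unit_rate_div:
  assumes r: "admissible_rate e0 r" and "0 < e0"
    and "\<forall>q\<in>set qs. 0 \<le> q" and "s \<le> s' / e0"
  shows "list_all2 (\<lambda>c u. c \<le> u / e0)
           (ctimes r s (map (\<lambda>q. (q, 0)) qs)) (ctimes (unit_rate i) s' (map (\<lambda>q. (q, 0)) qs))"
  using assms(3,4)
proof (induction qs arbitrary: s s')
  case Nil
  show ?case by simp
next
  case (Cons q qs)
  then have "0 \<le> q" by simp
  have "completion_time r s q \<le> s + q / e0"
    using completion_time_bounds(2)[OF r \<open>0 < e0\<close> \<open>0 \<le> q\<close>] by simp
  also have "\<dots> \<le> (s' + q) / e0"
    using \<open>s \<le> s' / e0\<close> by (simp add: add_divide_distrib)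
  also have "\<dots> = completion_time (unit_rate i) s' q / e0"
    using completion_time_unit_rate[OF \<open>0 \<le> q\<close>] by simp
  finally show ?case using Cons by simp
qed

definition machine_ctimes :: "real list \<Rightarrow> (nat \<Rightarrow> real \<Rightarrow> real) \<Rightarrow> (nat \<times> real) list list \<Rightarrow> nat \<Rightarrow> real list" where
  "machine_ctimes ps R \<sigma> i = ctimes (R i) 0 (map (\<lambda>(j, d). (ps ! j, d)) (\<sigma> ! i))"

lemma makespan_machine_ctimes:
  "makespan ps R \<sigma> = Max ({0} \<union> (\<Union>i<length \<sigma>. set (machine_ctimes ps R \<sigma> i)))"
  by (simp add: makespan_def machine_ctimes_def)

lemma makespan_nonneg: "0 \<le> makespan ps R \<sigma>"
  unfolding makespan_machine_ctimes by (intro Max_ge) auto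

lemma machine_ctimes_le_makespan:
  "i < length \<sigma> \<Longrightarrow> x \<in> set (machine_ctimes ps R \<sigma> i) \<Longrightarrow> x \<le> makespan ps R \<sigma>"
  unfolding makespan_machine_ctimes by (intro Max_ge) auto

lemma makespan_le_mono:
  assumes "mono f" and "0 \<le> f 0"
    and "\<forall>i<length \<sigma>. list_all2 (\<lambda>x y. x \<le> f y) (machine_ctimes ps R \<sigma> i) (machine_ctimes ps R' \<sigma> i)"
  shows "makespan ps R \<sigma> \<le> f (makespan ps R' \<sigma>)"
proof -
  have "x \<le> f (makespan ps R' \<sigma>)" if i: "i < length \<sigma>" and "x \<in> set (machine_ctimes ps R \<sigma> i)" for i x
  proof -
    obtain k where k: "k < length (machine_ctimes ps R \<sigma> i)" and x: "x = machine_ctimes ps R \<sigma> i ! k"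
      using \<open>x \<in> set _\<close> by (auto simp: in_set_conv_nth)
    let ?y = "machine_ctimes ps R' \<sigma> i ! k"
    have y: "?y \<in> set (machine_ctimes ps R' \<sigma> i)"
      using assms(3) i k by (auto simp: list_all2_conv_all_nth)
    have "x \<le> f ?y"
      using assms(3) i k x by (auto simp: list_all2_conv_all_nth)
    also have "f ?y \<le> f (makespan ps R' \<sigma>)"
      using monoD[OF \<open>mono f\<close> machine_ctimes_le_makespan[OF i y]] .
    finally show ?thesis .
  qed
  moreover have "0 \<le> f (makespan ps R' \<sigma>)"
    using \<open>0 \<le> f 0\<close> monoD[OF \<open>mono f\<close> makespan_nonneg] by (rule order.trans)
  ultimately show ?thesis
    unfolding makespan_machine_ctimes by (intro Max.boundedI) auto
qed

lemma valid_sched_memD: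
  assumes "valid_sched m n \<sigma>" and "i < length \<sigma>" and "(j, d) \<in> set (\<sigma> ! i)"
  shows "j < n" and "0 \<le> d"
proof -
  have "(j, d) \<in> set (concat \<sigma>)" using assms(2,3) by auto
  then show "j < n" and "0 \<le> d"
    using assms(1) unfolding valid_sched_def by (force, force)
qed

lemma machine_ctimes_nodelay:
  assumes "i < length A"
  shows "machine_ctimes ps R (nodelay A) i = ctimes (R i) 0 (map (\<lambda>q. (q, 0)) (map ((!) ps) (A ! i)))"
  using assms by (simp add: machine_ctimes_def nodelay_def comp_def)

lemma makespan_nodelay_le_unit_rate_div:
  assumes valid: "valid_sched m (length ps) (nodelay A)" and nonneg: "\<forall>p\<in>set ps. 0 \<le> p"
    and rates: "\<forall>i<m. admissible_rate e0 (R i)" and "0 < e0"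
  shows "makespan ps R (nodelay A) \<le> makespan ps unit_rate (nodelay A) / e0"
proof (rule makespan_le_mono[where f = "\<lambda>y. y / e0"])
  show "mono (\<lambda>y. y / e0)" using \<open>0 < e0\<close> by (simp add: mono_def divide_right_mono)
  show "\<forall>i<length (nodelay A). list_all2 (\<lambda>x y. x \<le> y / e0)
      (machine_ctimes ps R (nodelay A) i) (machine_ctimes ps unit_rate (nodelay A) i)"
  proof (intro allI impI)
    fix i assume i: "i < length (nodelay A)"
    then have "i < m" and "i < length A"
      using valid by (simp_all add: valid_sched_def nodelay_def)
    have "\<forall>q\<in>set (map ((!) ps) (A ! i)). 0 \<le> q"
    proof
      fix q assume "q \<in> set (map ((!) ps) (A ! i))"
      then obtain j where j: "j \<in> set (A ! i)" and q: "q = ps ! j" by auto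
      from j have "(j, 0) \<in> set (nodelay A ! i)"
        using \<open>i < length A\<close> by (simp add: nodelay_def)
      then have "j < length ps" using valid_sched_memD(1)[OF valid i] by blast
      then show "0 \<le> q" using nonneg q by simp
    qed
    from ctimes_le_unit_rate_div[OF _ \<open>0 < e0\<close> this, of "R i" 0 0 i]
    show "list_all2 (\<lambda>x y. x \<le> y / e0)
        (machine_ctimes ps R (nodelay A) i) (machine_ctimes ps unit_rate (nodelay A) i)"
      using rates \<open>i < m\<close> \<open>i < length A\<close> by (simp add: machine_ctimes_nodelay)
  qed
qed simp

lemma unit_rate_makespan_le:
  assumes valid: "valid_sched m (length ps) \<sigma>" and nonneg: "\<forall>p\<in>set ps. 0 \<le> p"
    and rates: "\<forall>i<m. admissible_rate e0 (R i)" and "0 < e0"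
  shows "makespan ps unit_rate \<sigma> \<le> makespan ps R \<sigma>"
proof (rule makespan_le_mono[where f = "\<lambda>y. y"])
  show "mono (\<lambda>y::real. y)" by (rule monoI)
  show "\<forall>i<length \<sigma>. list_all2 (\<lambda>x y. x \<le> y) (machine_ctimes ps unit_rate \<sigma> i) (machine_ctimes ps R \<sigma> i)"
  proof (intro allI impI)
    fix i assume i: "i < length \<sigma>"
    then have "i < m" using valid by (simp add: valid_sched_def)
    have "\<forall>(p, d)\<in>set (map (\<lambda>(j, d). (ps ! j, d)) (\<sigma> ! i)). 0 \<le> p \<and> 0 \<le> d"
    proof clarsimp
      fix j d assume "(j, d) \<in> set (\<sigma> ! i)"
      with valid_sched_memD[OF valid i] nonneg show "0 \<le> ps ! j \<and> 0 \<le> d" by simp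
    qed
    from ctimes_unit_rate_le[OF _ \<open>0 < e0\<close> this, of "R i" 0 0 i]
    show "list_all2 (\<lambda>x y. x \<le> y) (machine_ctimes ps unit_rate \<sigma> i) (machine_ctimes ps R \<sigma> i)"
      using rates \<open>i < m\<close> by (simp add: machine_ctimes_def)
  qed
qed simp

lemma opt_le_makespan: "valid_sched m (length ps) \<sigma> \<Longrightarrow> opt m ps R \<le> makespan ps R \<sigma>"
  unfolding opt_def by (rule cInf_lower) (auto intro: bdd_belowI[of _ 0] makespan_nonneg)

lemma opt_nonneg: "valid_sched m (length ps) \<sigma> \<Longrightarrow> 0 \<le> opt m ps R"
  unfolding opt_def by (rule cInf_greatest) (auto intro: makespan_nonneg)

lemma opt_mono:
  assumes "valid_sched m (length ps) \<sigma>"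
    and "\<And>\<sigma>. valid_sched m (length ps) \<sigma> \<Longrightarrow> makespan ps R \<sigma> \<le> makespan ps R' \<sigma>"
  shows "opt m ps R \<le> opt m ps R'"
proof -
  have "opt m ps R \<le> makespan ps R' \<sigma>'" if "valid_sched m (length ps) \<sigma>'" for \<sigma>'
    using opt_le_makespan[OF that] assms(2)[OF that] by (rule order.trans)
  then show ?thesis
    unfolding opt_def[of m ps R'] using assms(1) by (intro cInf_greatest) auto
qed

lemma approximation_ratio_div:
  fixes e0 \<alpha> :: real
  assumes "0 < e0" and "M \<le> M1 / e0" and "M1 \<le> \<alpha> * OPT1"
    and "0 \<le> OPT1" and "OPT1 \<le> OPT" and "OPT \<le> M"
  shows "M \<le> \<alpha> / e0 * OPT"
proof (cases "0 \<le> \<alpha>")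
  case True
  have "M1 \<le> \<alpha> * OPT" using assms(3) mult_left_mono[OF assms(5) True] by (rule order.trans)
  then have "M1 / e0 \<le> \<alpha> * OPT / e0" using \<open>0 < e0\<close> by (simp add: divide_right_mono)
  then show ?thesis using assms(2) by simp
next
  case False
  then have "M1 \<le> 0" using assms(3,4) mult_nonpos_nonneg[of \<alpha> OPT1] by simp
  then have "M \<le> 0" using assms(1,2) divide_nonpos_pos[of M1 e0] by simp
  then have "OPT = 0" using assms(4-6) by simp
  then show ?thesis using \<open>M \<le> 0\<close> by simp
qed

theorem mainTheorem2:
  fixes m :: nat and e0 \<alpha> :: real and alg :: "real list \<Rightarrow> nat list list"
  assumes "m \<ge> 1" and "0 < e0" and "e0 \<le> 1"
    and approx: "\<forall>ps. (\<forall>p\<in>set ps. 0 < p) \<longrightarrow>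
        valid_sched m (length ps) (nodelay (alg ps)) \<and>
        makespan ps unit_rate (nodelay (alg ps)) \<le> \<alpha> * opt m ps unit_rate"
  shows "\<forall>ps t e. (\<forall>p\<in>set ps. 0 < p) \<longrightarrow> valid_profile m e0 t e \<longrightarrow>
        makespan ps (rate t e) (nodelay (alg ps)) \<le> (\<alpha> / e0) * opt m ps (rate t e)"
proof (intro allI impI)
  fix ps :: "real list" and t e :: "nat \<Rightarrow> nat \<Rightarrow> real"
  assume pos: "\<forall>p\<in>set ps. 0 < p" and profile: "valid_profile m e0 t e"
  let ?\<sigma> = "nodelay (alg ps)"
  have valid: "valid_sched m (length ps) ?\<sigma>"
    and alg: "makespan ps unit_rate ?\<sigma> \<le> \<alpha> * opt m ps unit_rate"
    using approx pos by auto
  have nonneg: "\<forall>p\<in>set ps. 0 \<le> p" using pos by auto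
  have rates: "\<forall>i<m. admissible_rate e0 (rate t e i)"
    using admissible_rate_rate[OF profile] by blast
  have "makespan ps (rate t e) ?\<sigma> \<le> makespan ps unit_rate ?\<sigma> / e0"
    using makespan_nodelay_le_unit_rate_div[OF valid nonneg rates \<open>0 < e0\<close>] .
  moreover have "opt m ps unit_rate \<le> opt m ps (rate t e)"
    using opt_mono[OF valid unit_rate_makespan_le[OF _ nonneg rates \<open>0 < e0\<close>]] .
  ultimately show "makespan ps (rate t e) ?\<sigma> \<le> (\<alpha> / e0) * opt m ps (rate t e)"
    by (rule approximation_ratio_div[OF \<open>0 < e0\<close> _ alg opt_nonneg[OF valid] _ opt_le_makespan[OF valid]])
qed

end
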